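(* Let $p\in K$, let $M$ be a PPV-extension of $K$ for $\delta^2Y-p\,\delta Y=0$, let $\eta\in M$ with $\delta^2\eta=p\,\delta\eta$ and $\delta\eta\neq0$, and let $L:=K\langle\delta\eta\rangle_\Delta$. Then $\delta\eta$ is not $\partial$-transcendental over $K$; consequently $L$ is finitely generated as a field over $K$ (it has finite transcendence degree over $K$).
   Context: All fields have characteristic zero. $F$ is a differentially closed $\partial$-field (every system of polynomial differential equations over $F$ having a solution in some $\partial$-field extension has one in $F$). $K:=F(x)$ with commuting derivations $\delta,\partial$ given by $\delta x=1$, $\partial x=0$, $\delta|_F=0$; $K^\delta=F$. For a $\Delta$-field extension $M$ of $K$ ($\Delta=\{\delta,\partial\}$) and $y\in M$, $K\langle y\rangle_\Delta$ denotes the $\Delta$-subfield generated over $K$ by all iterated derivatives of $y$. $y$ is $\partial$-transcendental over $K$ if $y,\partial y,\partial^2 y,\dots$ are algebraically independent over $K$. A PPV-extension of $K$ for $\delta^2Y-p\delta Y=0$ is a $\Delta$-field extension $M\supseteq K$ containing two $K^\delta$-linearly independent solutions, generated as a $\Delta$-field over $K$ by them, and with $M^\delta=K^\delta$. *)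

theory Defs
  imports Main "HOL-Algebra.Ring"
begin

text \<open>The ambient type 'a (a field of characteristic zero) plays the role of the
  Delta-field M; subfields of M are subsets of 'a.\<close>

definition is_subfield :: "'a::field set \<Rightarrow> bool" where
  "is_subfield S \<longleftrightarrow> 0 \<in> S \<and> 1 \<in> S \<and>
     (\<forall>a\<in>S. \<forall>b\<in>S. a + b \<in> S \<and> a * b \<in> S) \<and>
     (\<forall>a\<in>S. - a \<in> S \<and> inverse a \<in> S)"

definition field_gen :: "'a::field set \<Rightarrow> 'a set" where
  "field_gen A = \<Inter>{S. is_subfield S \<and> A \<subseteq> S}"

definition dfield_gen :: "('a::field \<Rightarrow> 'a) set \<Rightarrow> 'a set \<Rightarrow> 'a set" where
  "dfield_gen Ds A = \<Inter>{S. is_subfield S \<and> A \<subseteq> S \<and> (\<forall>D\<in>Ds. D ` S \<subseteq> S)}"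

definition is_derivation :: "('a::field \<Rightarrow> 'a) \<Rightarrow> bool" where
  "is_derivation D \<longleftrightarrow> (\<forall>a b. D (a + b) = D a + D b \<and> D (a * b) = a * D b + D a * b)"

text \<open>A polynomial is given by a finite
  nonempty set S of exponent vectors (supported on {0..<n}) and nonzero coefficients c.\<close>
definition alg_dependent :: "'a::field set \<Rightarrow> (nat \<Rightarrow> 'a) \<Rightarrow> nat \<Rightarrow> bool" where
  "alg_dependent K f n \<longleftrightarrow>
     (\<exists>S c. finite S \<and> S \<noteq> {} \<and> (\<forall>e\<in>S. \<forall>i\<ge>n. e i = 0) \<and>
        (\<forall>e\<in>S. c e \<in> K \<and> c e \<noteq> 0) \<and>
        (\<Sum>e\<in>S. c e * (\<Prod>i<n. f i ^ e i)) = 0)"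

definition d_transcendental :: "'a::field set \<Rightarrow> ('a \<Rightarrow> 'a) \<Rightarrow> 'a \<Rightarrow> bool" where
  "d_transcendental K D y \<longleftrightarrow> (\<forall>n. \<not> alg_dependent K (\<lambda>i. (D ^^ i) y) n)"

definition transcendental_over :: "'a::field set \<Rightarrow> 'a \<Rightarrow> bool" where
  "transcendental_over F x \<longleftrightarrow>
     (\<forall>q::'a list. (\<forall>c\<in>set q. c \<in> F) \<and> (\<exists>c\<in>set q. c \<noteq> 0) \<longrightarrow>
        (\<Sum>i<length q. q ! i * x ^ i) \<noteq> 0)"

text \<open>Differential polynomial expressions with coefficients of type 'c in the
  differential indeterminates y_0, y_1, ...; DVar i k stands for the k-th derivative of y_i.\<close>
datatype 'c dpol = DConst 'c | DVar nat nat | DAdd "'c dpol" "'c dpol"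
  | DMul "'c dpol" "'c dpol" | DNeg "'c dpol"

primrec deval :: "('b, 'm) ring_scheme \<Rightarrow> ('b \<Rightarrow> 'b) \<Rightarrow> ('c \<Rightarrow> 'b) \<Rightarrow> (nat \<Rightarrow> 'b) \<Rightarrow> 'c dpol \<Rightarrow> 'b" where
  "deval E D h y (DConst c) = h c"
| "deval E D h y (DVar i k) = (D ^^ k) (y i)"
| "deval E D h y (DAdd P Q) = deval E D h y P \<oplus>\<^bsub>E\<^esub> deval E D h y Q"
| "deval E D h y (DMul P Q) = deval E D h y P \<otimes>\<^bsub>E\<^esub> deval E D h y Q"
| "deval E D h y (DNeg P) = \<ominus>\<^bsub>E\<^esub> deval E D h y P"

primrec deval0 :: "('a::field \<Rightarrow> 'a) \<Rightarrow> (nat \<Rightarrow> 'a) \<Rightarrow> 'a dpol \<Rightarrow> 'a" where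
  "deval0 D y (DConst c) = c"
| "deval0 D y (DVar i k) = (D ^^ k) (y i)"
| "deval0 D y (DAdd P Q) = deval0 D y P + deval0 D y Q"
| "deval0 D y (DMul P Q) = deval0 D y P * deval0 D y Q"
| "deval0 D y (DNeg P) = - deval0 D y P"

definition dfield_ext :: "'a::field set \<Rightarrow> ('a \<Rightarrow> 'a) \<Rightarrow> 'b ring \<Rightarrow> ('b \<Rightarrow> 'b) \<Rightarrow> ('a \<Rightarrow> 'b) \<Rightarrow> bool" where
  "dfield_ext F dp E D h \<longleftrightarrow> field E \<and>
     D ` carrier E \<subseteq> carrier E \<and>
     (\<forall>a\<in>carrier E. \<forall>b\<in>carrier E. D (a \<oplus>\<^bsub>E\<^esub> b) = D a \<oplus>\<^bsub>E\<^esub> D b \<and>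
        D (a \<otimes>\<^bsub>E\<^esub> b) = (a \<otimes>\<^bsub>E\<^esub> D b) \<oplus>\<^bsub>E\<^esub> (D a \<otimes>\<^bsub>E\<^esub> b)) \<and>
     h ` F \<subseteq> carrier E \<and> h 1 = \<one>\<^bsub>E\<^esub> \<and>
     (\<forall>a\<in>F. \<forall>b\<in>F. h (a + b) = h a \<oplus>\<^bsub>E\<^esub> h b \<and> h (a * b) = h a \<otimes>\<^bsub>E\<^esub> h b) \<and>
     (\<forall>a\<in>F. D (h a) = h (dp a))"

text \<open>Extensions are taken with carriers in the ambient type 'a; since F \<subseteq> 'a is infinite
  and the extension generated by a solution has cardinality |F|, this loses no generality.\<close>
definition diff_closed :: "'a::field set \<Rightarrow> ('a \<Rightarrow> 'a) \<Rightarrow> bool" where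
  "diff_closed F dp \<longleftrightarrow>
     (\<forall>Ps :: 'a dpol list. (\<forall>P\<in>set Ps. set_dpol P \<subseteq> F) \<longrightarrow>
        (\<exists>(E::'a ring) D h y. dfield_ext F dp E D h \<and> (\<forall>i. y i \<in> carrier E) \<and>
            (\<forall>P\<in>set Ps. deval E D h y P = \<zero>\<^bsub>E\<^esub>)) \<longrightarrow>
        (\<exists>y. (\<forall>i. y i \<in> F) \<and> (\<forall>P\<in>set Ps. deval0 dp y P = 0)))"

end

theory Submission
  imports Defs "HOL-Computational_Algebra.Polynomial"
begin

text \<open>Write \<delta> = d, \<partial> = dp, u = \<delta>\<eta> and v = \<partial>u / u. From \<delta>u = p u and the commutation of
  \<delta> and \<partial> we get \<delta>(\<partial>^k v) = \<partial>^(k+1) p \<in> K = F(x). Hermite reduction with respect to one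
  square-free denominator S writes every \<partial>^(k+1) p as R_k / S + \<delta> w_k with deg R_k < deg S and
  w_k \<in> K, so deg S + 1 of them are F-linearly dependent modulo \<delta>K. The same combination of
  the \<partial>^k v has \<delta>-derivative zero, hence lies in K because M has no new \<delta>-constants. This
  linear \<partial>-equation for v is, after clearing the denominators u^(k+1), a nontrivial algebraic
  relation among u, \<partial>u, \<partial>^2 u, ..., and it expresses \<partial>^N v through u and finitely many
  \<partial>^k v, which therefore generate L over K.\<close>

lemma subfield_zero: "is_subfield S \<Longrightarrow> 0 \<in> S"
  by (simp add: is_subfield_def)

lemma subfield_one: "is_subfield S \<Longrightarrow> 1 \<in> S"
  by (simp add: is_subfield_def)

lemma subfield_add: "is_subfield S \<Longrightarrow> a \<in> S \<Longrightarrow> b \<in> S \<Longrightarrow> a + b \<in> S"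
  by (simp add: is_subfield_def)

lemma subfield_mult: "is_subfield S \<Longrightarrow> a \<in> S \<Longrightarrow> b \<in> S \<Longrightarrow> a * b \<in> S"
  by (simp add: is_subfield_def)

lemma subfield_uminus: "is_subfield S \<Longrightarrow> a \<in> S \<Longrightarrow> - a \<in> S"
  by (simp add: is_subfield_def)

lemma subfield_inverse: "is_subfield S \<Longrightarrow> a \<in> S \<Longrightarrow> inverse a \<in> S"
  by (simp add: is_subfield_def)

lemma subfield_diff: "is_subfield S \<Longrightarrow> a \<in> S \<Longrightarrow> b \<in> S \<Longrightarrow> a - b \<in> S"
  by (metis diff_conv_add_uminus subfield_add subfield_uminus)

lemma subfield_divide: "is_subfield S \<Longrightarrow> a \<in> S \<Longrightarrow> b \<in> S \<Longrightarrow> a / b \<in> S"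
  by (metis divide_inverse subfield_inverse subfield_mult)

lemma subfield_power: "is_subfield S \<Longrightarrow> a \<in> S \<Longrightarrow> a ^ n \<in> S"
  by (induction n) (auto intro: subfield_one subfield_mult)

lemma subfield_of_nat: "is_subfield S \<Longrightarrow> of_nat n \<in> S"
  by (induction n) (auto intro: subfield_zero subfield_one subfield_add)

lemma subfield_sum: "is_subfield S \<Longrightarrow> (\<And>i. i \<in> A \<Longrightarrow> f i \<in> S) \<Longrightarrow> sum f A \<in> S"
  by (induction A rule: infinite_finite_induct) (auto intro: subfield_zero subfield_add)

lemma subfield_solve_last:
  fixes N :: nat
  assumes S: "is_subfield S" and rel: "(\<Sum>k\<le>N. c k * v k) \<in> S"
    and c: "\<And>k. c k \<in> S" "c N \<noteq> 0" and v: "\<And>k. k < N \<Longrightarrow> v k \<in> S"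
  shows "v N \<in> S"
proof -
  have "c N * v N = (\<Sum>k\<le>N. c k * v k) - (\<Sum>k<N. c k * v k)"
    by (simp add: lessThan_Suc_atMost[symmetric])
  then have "v N = ((\<Sum>k\<le>N. c k * v k) - (\<Sum>k<N. c k * v k)) / c N"
    using c(2) by (simp add: field_simps)
  moreover have "(\<Sum>k<N. c k * v k) \<in> S"
    using c(1) v by (intro subfield_sum[OF S] subfield_mult[OF S]) auto
  ultimately show ?thesis
    using rel c(1) by (simp add: subfield_divide[OF S] subfield_diff[OF S])
qed

lemma is_subfield_field_gen: "is_subfield (field_gen A)"
  unfolding field_gen_def is_subfield_def by auto

lemma field_gen_superset: "A \<subseteq> field_gen A"
  unfolding field_gen_def by auto

lemma field_gen_least: "is_subfield S \<Longrightarrow> A \<subseteq> S \<Longrightarrow> field_gen A \<subseteq> S"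
  unfolding field_gen_def by auto

lemma is_subfield_dfield_gen: "is_subfield (dfield_gen Ds A)"
  unfolding dfield_gen_def is_subfield_def by auto

lemma dfield_gen_superset: "A \<subseteq> dfield_gen Ds A"
  unfolding dfield_gen_def by auto

lemma dfield_gen_closed: "D \<in> Ds \<Longrightarrow> y \<in> dfield_gen Ds A \<Longrightarrow> D y \<in> dfield_gen Ds A"
  unfolding dfield_gen_def by blast

lemma dfield_gen_least:
  "is_subfield S \<Longrightarrow> A \<subseteq> S \<Longrightarrow> (\<And>D. D \<in> Ds \<Longrightarrow> D ` S \<subseteq> S) \<Longrightarrow> dfield_gen Ds A \<subseteq> S"
  unfolding dfield_gen_def by auto

lemma dfield_gen_log_deriv:
  assumes "D \<in> Ds"
  shows "(D ^^ k) (D u / u) \<in> dfield_gen Ds (insert u A)"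
proof (induction k)
  case 0
  have "u \<in> dfield_gen Ds (insert u A)"
    using dfield_gen_superset by blast
  then show ?case
    using dfield_gen_closed[OF assms] by (simp add: subfield_divide[OF is_subfield_dfield_gen])
next
  case (Suc k)
  then show ?case
    using dfield_gen_closed[OF assms] by simp
qed

locale derivation =
  fixes D :: "'a::field_char_0 \<Rightarrow> 'a"
  assumes is_derivation: "is_derivation D"
begin

lemma add: "D (a + b) = D a + D b"
  using is_derivation by (simp add: is_derivation_def)

lemma mult: "D (a * b) = a * D b + D a * b"
  using is_derivation by (simp add: is_derivation_def)

lemma zero [simp]: "D 0 = 0"
  using add[of 0 0] by simp

lemma one [simp]: "D 1 = 0"
  using mult[of 1 1] by simp

lemma uminus: "D (- a) = - D a"
  using add[of a "- a"] by (simp add: eq_neg_iff_add_eq_0 add.commute)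

lemma diff: "D (a - b) = D a - D b"
  using add[of a "- b"] by (simp add: uminus)

lemma of_nat [simp]: "D (of_nat n) = 0"
  by (induction n) (simp_all add: add)

lemma sum: "D (sum f A) = (\<Sum>i\<in>A. D (f i))"
  by (induction A rule: infinite_finite_induct) (simp_all add: add)

lemma mult_const: "D c = 0 \<Longrightarrow> D (c * a) = c * D a"
  by (simp add: mult)

lemma power: "D (a ^ n) = of_nat n * a ^ (n - 1) * D a"
proof (cases n)
  case (Suc m)
  have "D (a ^ Suc m) = of_nat (Suc m) * a ^ m * D a"
    by (induction m) (simp_all add: mult algebra_simps)
  then show ?thesis
    using Suc by simp
qed simp

lemma inverse: "D (inverse a) = - D a / a ^ 2"
proof (cases "a = 0")
  case False
  have "0 = D (a * inverse a)"
    using False by simp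
  also have "\<dots> = a * D (inverse a) + D a * inverse a"
    by (rule mult)
  finally have "a * D (inverse a) = - (D a * inverse a)"
    by (simp add: eq_neg_iff_add_eq_0)
  then show ?thesis
    using False by (simp add: field_simps power2_eq_square)
qed simp

lemma divide:
  assumes "b \<noteq> 0"
  shows "D (a / b) = (D a * b - a * D b) / b ^ 2"
proof -
  have "D (a / b) = a * (- D b / b ^ 2) + D a * inverse b"
    by (simp add: divide_inverse mult inverse)
  also have "\<dots> = (D a * b - a * D b) / b ^ 2"
    using assms by (simp add: field_simps power2_eq_square)
  finally show ?thesis .
qed

lemma divide_const: "D c = 0 \<Longrightarrow> D (a / c) = D a / c"
  by (simp add: divide_inverse mult inverse)

lemma field_gen_closed:
  assumes gen: "\<And>a. a \<in> A \<Longrightarrow> D a \<in> field_gen A" and y: "y \<in> field_gen A"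
  shows "D y \<in> field_gen A"
proof -
  let ?S = "{y \<in> field_gen A. D y \<in> field_gen A}"
  note sf = is_subfield_field_gen[of A]
  have "is_subfield ?S"
    unfolding is_subfield_def
  proof (intro conjI ballI)
    fix a b assume "a \<in> ?S" "b \<in> ?S"
    then show "a + b \<in> ?S" "a * b \<in> ?S"
      by (simp_all add: add mult sf subfield_add subfield_mult)
  next
    fix a assume "a \<in> ?S"
    then show "- a \<in> ?S" "inverse a \<in> ?S"
      by (simp_all add: uminus inverse sf subfield_uminus subfield_inverse subfield_divide subfield_power)
  qed (simp_all add: sf subfield_zero subfield_one)
  moreover have "A \<subseteq> ?S"
    using gen field_gen_superset by auto
  ultimately show ?thesis
    using y field_gen_least by blast
qed

text \<open>One step of Hermite reduction: if \<alpha> s + \<beta> D s = 1, the order of the pole along s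
  drops by one modulo derivatives.\<close>

lemma hermite_step:
  assumes s: "s \<noteq> 0" and bezout: "\<alpha> * s + \<beta> * D s = 1" and N: "N \<noteq> 0"
  shows "c / s ^ Suc N = (c * \<alpha> + D (c * \<beta>) / of_nat N) / s ^ N + D (- (c * \<beta> / s ^ N) / of_nat N)"
proof -
  have "D (- (c * \<beta> / s ^ N) / of_nat N) = D (- (c * \<beta> / s ^ N)) / of_nat N"
    by (rule divide_const) simp
  also have "\<dots> = - D (c * \<beta> / s ^ N) / of_nat N"
    by (simp only: uminus)
  also have "D (c * \<beta> / s ^ N) = (D (c * \<beta>) * s ^ N - c * \<beta> * D (s ^ N)) / (s ^ N) ^ 2"
    by (rule divide) (simp add: s)
  also have "\<dots> = D (c * \<beta>) / s ^ N - of_nat N * (c * \<beta>) * D s / s ^ Suc N"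
    unfolding power using s N by (cases N) (simp_all add: field_simps power2_eq_square)
  finally have D_w: "D (- (c * \<beta> / s ^ N) / of_nat N)
      = - (D (c * \<beta>) / s ^ N - of_nat N * (c * \<beta>) * D s / s ^ Suc N) / of_nat N" .
  have "c / s ^ Suc N = c * (\<alpha> * s + \<beta> * D s) / s ^ Suc N"
    using bezout by simp
  also have "\<dots> = (c * \<alpha> + D (c * \<beta>) / of_nat N) / s ^ N
      + - (D (c * \<beta>) / s ^ N - of_nat N * (c * \<beta>) * D s / s ^ Suc N) / of_nat N"
    using s N by (simp add: field_simps)
  finally show ?thesis
    unfolding D_w .
qed

end

lemma dfield_gen_eq_field_gen:
  assumes A: "A \<subseteq> field_gen B" and B: "B \<subseteq> dfield_gen Ds A"
    and Ds: "\<And>D. D \<in> Ds \<Longrightarrow> derivation D \<and> (\<forall>b\<in>B. D b \<in> field_gen B)"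
  shows "dfield_gen Ds A = field_gen B"
proof
  show "dfield_gen Ds A \<subseteq> field_gen B"
    using A Ds derivation.field_gen_closed
    by (intro dfield_gen_least is_subfield_field_gen) blast+
  show "field_gen B \<subseteq> dfield_gen Ds A"
    using B by (intro field_gen_least is_subfield_dfield_gen)
qed

inductive_set poly_expr :: "'a::field set \<Rightarrow> (nat \<Rightarrow> 'a) \<Rightarrow> nat \<Rightarrow> 'a set"
  for K f m
where
  const: "c \<in> K \<Longrightarrow> c \<in> poly_expr K f m"
| var: "i < m \<Longrightarrow> f i \<in> poly_expr K f m"
| plus: "a \<in> poly_expr K f m \<Longrightarrow> b \<in> poly_expr K f m \<Longrightarrow> a + b \<in> poly_expr K f m"
| times: "a \<in> poly_expr K f m \<Longrightarrow> b \<in> poly_expr K f m \<Longrightarrow> a * b \<in> poly_expr K f m"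

lemma poly_expr_mono: "a \<in> poly_expr K f m \<Longrightarrow> m \<le> m' \<Longrightarrow> a \<in> poly_expr K f m'"
  by (induction rule: poly_expr.induct) (auto intro: poly_expr.intros)

lemma poly_expr_diff:
  assumes "is_subfield K" "a \<in> poly_expr K f m" "b \<in> poly_expr K f m"
  shows "a - b \<in> poly_expr K f m"
proof -
  have "(- 1) * b \<in> poly_expr K f m"
    using assms by (blast intro: poly_expr.times poly_expr.const subfield_uminus subfield_one)
  then show ?thesis
    using assms(2) poly_expr.plus by fastforce
qed

lemma poly_expr_power: "is_subfield K \<Longrightarrow> a \<in> poly_expr K f m \<Longrightarrow> a ^ n \<in> poly_expr K f m"
  by (induction n) (auto intro: poly_expr.intros subfield_one)

lemma poly_expr_sum:
  "is_subfield K \<Longrightarrow> (\<And>i. i \<in> A \<Longrightarrow> g i \<in> poly_expr K f m) \<Longrightarrow> sum g A \<in> poly_expr K f m"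
  by (induction A rule: infinite_finite_induct) (auto intro: poly_expr.intros subfield_zero)

lemma prod_power_add: "(\<Prod>i<n. f i ^ (e1 i + e2 i)) = (\<Prod>i<n. f i ^ e1 i) * (\<Prod>i<n. f i ^ e2 i)"
  by (simp add: power_add prod.distrib)

lemma prod_power_single: "(j::nat) < n \<Longrightarrow> (\<Prod>i<n. f i ^ (if i = j then k else 0)) = f j ^ k"
proof -
  assume "j < n"
  have "(\<Prod>i<n. f i ^ (if i = j then k else 0)) = (\<Prod>i<n. if i = j then f i ^ k else 1)"
    by (intro prod.cong) auto
  also have "\<dots> = f j ^ k"
    using \<open>j < n\<close> by (subst prod.delta) auto
  finally show ?thesis .
qed

text \<open>The exponent vectors vanish from m on, but the products range over i < n, which may
  exceed m.\<close>

definition monomial_sum :: "'a::field set \<Rightarrow> nat \<Rightarrow> nat \<Rightarrow> (nat \<Rightarrow> 'a) \<Rightarrow> 'a \<Rightarrow> bool" where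
  "monomial_sum K m n f a \<longleftrightarrow> (\<exists>S c. finite S \<and> (\<forall>e\<in>S. c e \<in> K \<and> (\<forall>i\<ge>m. e i = 0)) \<and>
     a = (\<Sum>e\<in>S. c e * (\<Prod>i<n. f i ^ e i)))"

lemma monomial_sum_const: "c \<in> K \<Longrightarrow> monomial_sum K m n f c"
  unfolding monomial_sum_def by (intro exI[of _ "{\<lambda>_. 0}"] exI[of _ "\<lambda>_. c"]) simp

lemma monomial_sum_var:
  assumes "is_subfield K" "i < m" "m \<le> n"
  shows "monomial_sum K m n f (f i)"
proof -
  have "(\<Prod>j<n. f j ^ (if j = i then 1 else 0)) = f i"
    using assms prod_power_single[of i n f 1] by simp
  then show ?thesis
    unfolding monomial_sum_def using assms
    by (intro exI[of _ "{\<lambda>j. if j = i then 1 else 0}"] exI[of _ "\<lambda>_. 1"]) (auto simp: subfield_one)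
qed

lemma monomial_sum_add:
  assumes K: "is_subfield K" and "monomial_sum K m n f a" "monomial_sum K m n f b"
  shows "monomial_sum K m n f (a + b)"
proof -
  obtain S1 c1 S2 c2 where
    S1: "finite S1" "\<forall>e\<in>S1. c1 e \<in> K \<and> (\<forall>i\<ge>m. e i = 0)" "a = (\<Sum>e\<in>S1. c1 e * (\<Prod>i<n. f i ^ e i))" and
    S2: "finite S2" "\<forall>e\<in>S2. c2 e \<in> K \<and> (\<forall>i\<ge>m. e i = 0)" "b = (\<Sum>e\<in>S2. c2 e * (\<Prod>i<n. f i ^ e i))"
    using assms(2,3) unfolding monomial_sum_def by blast
  define c where "c e = (if e \<in> S1 then c1 e else 0) + (if e \<in> S2 then c2 e else 0)" for e
  have restrict: "(\<Sum>e\<in>S1 \<union> S2. if e \<in> S then g e else 0) = sum g S"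
    if "S \<subseteq> S1 \<union> S2" for S and g :: "(nat \<Rightarrow> nat) \<Rightarrow> 'a"
    using that S1(1) S2(1) by (simp add: sum.inter_restrict[symmetric] Int_absorb1)
  have "(\<Sum>e\<in>S1 \<union> S2. c e * (\<Prod>i<n. f i ^ e i))
      = (\<Sum>e\<in>S1 \<union> S2. (if e \<in> S1 then c1 e * (\<Prod>i<n. f i ^ e i) else 0)
                      + (if e \<in> S2 then c2 e * (\<Prod>i<n. f i ^ e i) else 0))"
    by (intro sum.cong) (simp_all add: c_def distrib_right)
  also have "\<dots> = a + b"
    unfolding sum.distrib restrict[OF Un_upper1] restrict[OF Un_upper2] S1(3) S2(3) ..
  finally have "(\<Sum>e\<in>S1 \<union> S2. c e * (\<Prod>i<n. f i ^ e i)) = a + b" .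
  moreover have "\<forall>e\<in>S1 \<union> S2. c e \<in> K \<and> (\<forall>i\<ge>m. e i = 0)"
    using S1(2) S2(2) K by (auto simp: c_def intro: subfield_add subfield_zero)
  ultimately show ?thesis
    unfolding monomial_sum_def using S1(1) S2(1)
    by (intro exI[of _ "S1 \<union> S2"] exI[of _ c]) auto
qed

lemma monomial_sum_mult:
  assumes K: "is_subfield K" and "monomial_sum K m n f a" "monomial_sum K m n f b"
  shows "monomial_sum K m n f (a * b)"
proof -
  obtain S1 c1 S2 c2 where
    S1: "finite S1" "\<forall>e\<in>S1. c1 e \<in> K \<and> (\<forall>i\<ge>m. e i = 0)" "a = (\<Sum>e\<in>S1. c1 e * (\<Prod>i<n. f i ^ e i))" and
    S2: "finite S2" "\<forall>e\<in>S2. c2 e \<in> K \<and> (\<forall>i\<ge>m. e i = 0)" "b = (\<Sum>e\<in>S2. c2 e * (\<Prod>i<n. f i ^ e i))"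
    using assms(2,3) unfolding monomial_sum_def by blast
  define h where "h q = (\<lambda>i. fst q i + snd q i)" for q :: "(nat \<Rightarrow> nat) \<times> (nat \<Rightarrow> nat)"
  define t where "t q = c1 (fst q) * c2 (snd q)" for q
  define c where "c e = (\<Sum>q\<in>{q \<in> S1 \<times> S2. h q = e}. t q)" for e
  have fin: "finite (S1 \<times> S2)"
    using S1(1) S2(1) by simp
  have "a * b = (\<Sum>q\<in>S1 \<times> S2. t q * (\<Prod>i<n. f i ^ h q i))"
    unfolding S1(3) S2(3) sum_product sum.cartesian_product h_def t_def
    by (intro sum.cong) (auto simp: prod_power_add mult_ac)
  also have "\<dots> = (\<Sum>e\<in>h ` (S1 \<times> S2). \<Sum>q\<in>{q \<in> S1 \<times> S2. h q = e}. t q * (\<Prod>i<n. f i ^ h q i))"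
    by (rule sum.image_gen[OF fin])
  also have "\<dots> = (\<Sum>e\<in>h ` (S1 \<times> S2). c e * (\<Prod>i<n. f i ^ e i))"
    unfolding c_def sum_distrib_right by (intro sum.cong) auto
  finally have "a * b = (\<Sum>e\<in>h ` (S1 \<times> S2). c e * (\<Prod>i<n. f i ^ e i))" .
  moreover have "\<forall>e\<in>h ` (S1 \<times> S2). c e \<in> K \<and> (\<forall>i\<ge>m. e i = 0)"
    using S1(2) S2(2) K by (auto simp: c_def t_def h_def intro!: subfield_sum subfield_mult)
  ultimately show ?thesis
    unfolding monomial_sum_def using fin
    by (intro exI[of _ "h ` (S1 \<times> S2)"] exI[of _ c]) auto
qed

lemma poly_expr_monomial_sum:
  assumes "is_subfield K" "a \<in> poly_expr K f m" "m \<le> n"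
  shows "monomial_sum K m n f a"
  using assms(2)
proof induction
  case (var i)
  then show ?case
    using monomial_sum_var assms(1,3) by blast
qed (simp_all add: monomial_sum_const monomial_sum_add monomial_sum_mult assms(1))

lemma poly_expr_leading_term_alg_dependent:
  assumes K: "is_subfield K" and a: "a \<in> poly_expr K f m" and "m < n"
    and c: "c \<in> K" "c \<noteq> 0" and e: "\<forall>i\<ge>n. e i = 0" "e m \<noteq> 0"
    and zero: "c * (\<Prod>i<n. f i ^ e i) + a = 0"
  shows "alg_dependent K f n"
proof -
  obtain S c' where S: "finite S" "\<forall>e\<in>S. c' e \<in> K \<and> (\<forall>i\<ge>m. e i = 0)"
    and a_sum: "a = (\<Sum>e\<in>S. c' e * (\<Prod>i<n. f i ^ e i))"
    using poly_expr_monomial_sum[OF K a less_imp_le[OF \<open>m < n\<close>]] unfolding monomial_sum_def by blast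
  have "e \<notin> S"
    using S(2) e(2) by auto
  define c'' where "c'' = c'(e := c)"
  define T where "T = {e' \<in> insert e S. c'' e' \<noteq> 0}"
  have "(\<Sum>e'\<in>T. c'' e' * (\<Prod>i<n. f i ^ e' i)) = (\<Sum>e'\<in>insert e S. c'' e' * (\<Prod>i<n. f i ^ e' i))"
    unfolding T_def using S(1) by (intro sum.mono_neutral_left) auto
  also have "\<dots> = c * (\<Prod>i<n. f i ^ e i) + a"
    using S(1) \<open>e \<notin> S\<close> unfolding a_sum c''_def
    by (simp add: sum.insert) (intro sum.cong; auto)
  also have "\<dots> = 0"
    by (rule zero)
  finally have "(\<Sum>e'\<in>T. c'' e' * (\<Prod>i<n. f i ^ e' i)) = 0" .
  moreover have "e \<in> T"
    using c(2) by (simp add: T_def c''_def)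
  moreover have "\<forall>e'\<in>T. (\<forall>i\<ge>n. e' i = 0) \<and> c'' e' \<in> K \<and> c'' e' \<noteq> 0"
    using S(2) e(1) c(1) \<open>m < n\<close> by (auto simp: T_def c''_def)
  moreover have "finite T"
    using S(1) by (simp add: T_def)
  ultimately show ?thesis
    unfolding alg_dependent_def by blast
qed

context derivation
begin

lemma poly_expr_closed:
  assumes K: "D ` K \<subseteq> K" and f: "\<And>i. D (f i) = f (Suc i)"
  shows "a \<in> poly_expr K f m \<Longrightarrow> D a \<in> poly_expr K f (Suc m)"
proof (induction rule: poly_expr.induct)
  case (plus a b)
  then show ?case
    by (simp add: add poly_expr.plus)
next
  case (times a b)
  then have "a \<in> poly_expr K f (Suc m)" "b \<in> poly_expr K f (Suc m)"
    by (auto intro: poly_expr_mono)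
  then show ?case
    using times.IH by (simp add: mult poly_expr.plus poly_expr.times)
qed (use K in \<open>auto intro: poly_expr.intros simp: f\<close>)

text \<open>Elements of poly_expr K f (Suc k) only involve u, ..., D^k u, so u^k D^(k+1) u is the
  only term containing the top derivative.\<close>

lemma log_deriv_funpow_poly_expr:
  assumes K: "is_subfield K" "D ` K \<subseteq> K" and u: "u \<noteq> 0"
  defines "f \<equiv> \<lambda>i. (D ^^ i) u"
  shows "\<exists>H \<in> poly_expr K f (Suc k). u ^ Suc k * (D ^^ k) (D u / u) = u ^ k * f (Suc k) + H"
proof (induction k)
  case 0
  have "u * (D u / u) = f (Suc 0)"
    using u by (simp add: f_def)
  then show ?case
    using poly_expr.const[OF subfield_zero[OF K(1)]] by force
next
  case (Suc k)
  define Q where "Q k = u ^ Suc k * (D ^^ k) (D u / u)" for k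
  have f_Suc: "D (f i) = f (Suc i)" for i
    by (simp add: f_def)
  have u_expr: "u \<in> poly_expr K f (Suc m)" for m
  proof -
    have "f 0 \<in> poly_expr K f (Suc m)"
      by (rule poly_expr.var) simp
    then show ?thesis
      by (simp add: f_def)
  qed
  have D_expr: "a \<in> poly_expr K f m \<Longrightarrow> D a \<in> poly_expr K f (Suc m)" for a m
    by (rule poly_expr_closed[where f = f, OF K(2) f_Suc])
  from Suc obtain H where H: "H \<in> poly_expr K f (Suc k)" "Q k = u ^ k * f (Suc k) + H"
    unfolding Q_def by blast
  have "D (u ^ Suc k) = of_nat (Suc k) * u ^ k * D u"
    using power[of u "Suc k"] by simp
  then have "Q (Suc k) = u * D (Q k) - of_nat (Suc k) * f 1 * Q k"
    by (simp add: Q_def mult f_def algebra_simps del: power_Suc) (simp add: algebra_simps)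
  also have "\<dots> = u ^ Suc k * f (Suc (Suc k))
      + (u * D (u ^ k) * f (Suc k) + u * D H - of_nat (Suc k) * f 1 * Q k)"
    unfolding H(2) by (simp add: add mult f_Suc algebra_simps)
  finally have Q_Suc: "Q (Suc k) = u ^ Suc k * f (Suc (Suc k))
      + (u * D (u ^ k) * f (Suc k) + u * D H - of_nat (Suc k) * f 1 * Q k)" .
  let ?m = "Suc (Suc k)"
  have "D (u ^ k) \<in> poly_expr K f ?m"
    using D_expr[OF poly_expr_power[OF K(1) u_expr]] poly_expr_mono by fastforce
  moreover have "f (Suc k) \<in> poly_expr K f ?m" "f 1 \<in> poly_expr K f ?m"
    by (auto intro: poly_expr.var)
  moreover have "D H \<in> poly_expr K f ?m"
    using D_expr[OF H(1)] .
  moreover have "Q k \<in> poly_expr K f ?m"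
    unfolding H(2) using H(1) u_expr \<open>f (Suc k) \<in> poly_expr K f ?m\<close>
    by (intro poly_expr.plus poly_expr.times poly_expr_power[OF K(1)]) (auto intro: poly_expr_mono)
  ultimately have "u * D (u ^ k) * f (Suc k) + u * D H - of_nat (Suc k) * f 1 * Q k \<in> poly_expr K f ?m"
    using u_expr by (intro poly_expr_diff[OF K(1)] poly_expr.plus poly_expr.times
        poly_expr.const[OF subfield_of_nat[OF K(1)]])
  then show ?case
    using Q_Suc unfolding Q_def by blast
qed

lemma log_deriv_funpow_cleared_poly_expr:
  assumes K: "is_subfield K" "D ` K \<subseteq> K" and u: "u \<noteq> 0"
  shows "u ^ Suc k * (D ^^ k) (D u / u) \<in> poly_expr K (\<lambda>i. (D ^^ i) u) (Suc (Suc k))"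
proof -
  let ?f = "\<lambda>i. (D ^^ i) u"
  obtain H where H: "H \<in> poly_expr K ?f (Suc k)" "u ^ Suc k * (D ^^ k) (D u / u) = u ^ k * ?f (Suc k) + H"
    using log_deriv_funpow_poly_expr[OF K u] by blast
  have "u \<in> poly_expr K ?f (Suc (Suc k))" "?f (Suc k) \<in> poly_expr K ?f (Suc (Suc k))"
    using poly_expr.var[of 0 "Suc (Suc k)" ?f K] poly_expr.var[of "Suc k" "Suc (Suc k)" ?f K] by simp_all
  then show ?thesis
    unfolding H(2) using H(1)
    by (intro poly_expr.plus poly_expr.times poly_expr_power[OF K(1)]) (auto elim: poly_expr_mono)
qed

lemma log_deriv_relation_not_d_transcendental:
  assumes K: "is_subfield K" "D ` K \<subseteq> K" and u: "u \<noteq> 0"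
    and c: "\<And>k. c k \<in> K" "c N \<noteq> 0"
    and rel: "(\<Sum>k\<le>N. c k * (D ^^ k) (D u / u)) \<in> K"
  shows "\<not> d_transcendental K D u"
proof -
  define f where "f i = (D ^^ i) u" for i
  define Q where "Q k = u ^ Suc k * (D ^^ k) (D u / u)" for k
  define Y where "Y = (\<Sum>k\<le>N. c k * (D ^^ k) (D u / u))"
  have Q_form: "\<exists>H \<in> poly_expr K f (Suc k). Q k = u ^ k * f (Suc k) + H" for k
    using log_deriv_funpow_poly_expr[OF K u] unfolding Q_def f_def by blast
  have u_expr: "u \<in> poly_expr K f (Suc N)"
    using poly_expr.var[of 0 "Suc N" f K] by (simp add: f_def)
  have Q_expr: "Q k \<in> poly_expr K f (Suc N)" if "k < N" for k
    using log_deriv_funpow_cleared_poly_expr[OF K u, of k] that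
    unfolding Q_def f_def by (auto elim: poly_expr_mono)
  obtain H where H: "H \<in> poly_expr K f (Suc N)" "Q N = u ^ N * f (Suc N) + H"
    using Q_form by blast
  have "u ^ Suc N * Y = (\<Sum>k\<le>N. c k * (u ^ (N - k) * Q k))"
    unfolding Y_def Q_def sum_distrib_left
    by (intro sum.cong) (auto simp: mult_ac simp flip: power_add)
  also have "\<dots> = c N * Q N + (\<Sum>k<N. c k * (u ^ (N - k) * Q k))"
    by (simp add: lessThan_Suc_atMost[symmetric])
  finally have "u ^ Suc N * Y = c N * Q N + (\<Sum>k<N. c k * (u ^ (N - k) * Q k))" .
  define R where "R = c N * H + (\<Sum>k<N. c k * (u ^ (N - k) * Q k)) - u ^ Suc N * Y"
  have Y_expr: "Y \<in> poly_expr K f (Suc N)"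
    using rel by (simp add: Y_def poly_expr.const)
  have c_expr: "c k \<in> poly_expr K f (Suc N)" for k
    using c(1) by (rule poly_expr.const)
  have "R \<in> poly_expr K f (Suc N)"
    unfolding R_def
    by (intro poly_expr_diff[OF K(1)] poly_expr.plus poly_expr.times poly_expr_sum[OF K(1)]
        poly_expr_power[OF K(1)] c_expr H(1) Q_expr Y_expr u_expr) simp
  define e where "e i = (if i = 0 then N else 0) + (if i = Suc N then 1 else 0)" for i :: nat
  have "(\<Prod>i<Suc (Suc N). f i ^ e i) = u ^ N * f (Suc N)"
    unfolding e_def prod_power_add by (simp add: prod_power_single f_def)
  then have zero: "c N * (\<Prod>i<Suc (Suc N). f i ^ e i) + R = 0"
    using \<open>u ^ Suc N * Y = c N * Q N + _\<close> by (simp add: R_def H(2) algebra_simps)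
  have "alg_dependent K f (Suc (Suc N))"
    by (rule poly_expr_leading_term_alg_dependent[OF K(1) \<open>R \<in> _\<close> lessI c _ _ zero])
      (simp_all add: e_def)
  then show ?thesis
    unfolding d_transcendental_def f_def by blast
qed

end

definition poly_over :: "'a::zero set \<Rightarrow> 'a poly \<Rightarrow> bool" where
  "poly_over F P \<longleftrightarrow> (\<forall>i. coeff P i \<in> F)"

lemma is_subfield_UNIV: "is_subfield UNIV"
  by (simp add: is_subfield_def)

lemma poly_over_UNIV [simp]: "poly_over UNIV P"
  by (simp add: poly_over_def)

locale subfield =
  fixes F :: "'a::field_char_0 set"
  assumes is_subfield: "is_subfield F"
begin

lemma poly_over_coeff: "poly_over F P \<Longrightarrow> coeff P i \<in> F"
  by (simp add: poly_over_def)

lemma poly_over_pCons: "poly_over F (pCons a P) \<longleftrightarrow> a \<in> F \<and> poly_over F P"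
  by (auto simp: poly_over_def coeff_pCons split: nat.split)

lemma poly_over_0 [simp]: "poly_over F 0"
  by (simp add: poly_over_def subfield_zero[OF is_subfield])

lemma poly_over_const: "c \<in> F \<Longrightarrow> poly_over F [:c:]"
  by (simp add: poly_over_pCons)

lemma poly_over_1 [simp]: "poly_over F 1"
  by (simp add: poly_over_def subfield_zero[OF is_subfield] subfield_one[OF is_subfield])

lemma poly_over_X: "poly_over F [:0, 1:]"
  by (simp add: poly_over_pCons subfield_zero[OF is_subfield] subfield_one[OF is_subfield])

lemma poly_over_monom: "c \<in> F \<Longrightarrow> poly_over F (monom c n)"
  by (simp add: poly_over_def coeff_monom subfield_zero[OF is_subfield])

lemma poly_over_add: "poly_over F P \<Longrightarrow> poly_over F Q \<Longrightarrow> poly_over F (P + Q)"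
  by (simp add: poly_over_def subfield_add[OF is_subfield])

lemma poly_over_uminus: "poly_over F P \<Longrightarrow> poly_over F (- P)"
  by (simp add: poly_over_def subfield_uminus[OF is_subfield])

lemma poly_over_diff: "poly_over F P \<Longrightarrow> poly_over F Q \<Longrightarrow> poly_over F (P - Q)"
  by (simp add: poly_over_def subfield_diff[OF is_subfield])

lemma poly_over_smult: "c \<in> F \<Longrightarrow> poly_over F P \<Longrightarrow> poly_over F (smult c P)"
  by (simp add: poly_over_def subfield_mult[OF is_subfield])

lemma poly_over_mult: "poly_over F P \<Longrightarrow> poly_over F Q \<Longrightarrow> poly_over F (P * Q)"
  unfolding poly_over_def coeff_mult
  by (auto intro!: subfield_sum[OF is_subfield] subfield_mult[OF is_subfield])

lemma poly_over_power: "poly_over F P \<Longrightarrow> poly_over F (P ^ n)"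
  by (induction n) (simp_all add: poly_over_mult)

lemma poly_over_sum: "(\<And>i. i \<in> A \<Longrightarrow> poly_over F (f i)) \<Longrightarrow> poly_over F (sum f A)"
  unfolding poly_over_def coeff_sum by (auto intro!: subfield_sum[OF is_subfield])

lemma poly_over_pderiv: "poly_over F P \<Longrightarrow> poly_over F (pderiv P)"
  unfolding poly_over_def coeff_pderiv
  by (metis subfield_mult[OF is_subfield] subfield_of_nat[OF is_subfield])

lemma poly_over_map_poly:
  "(\<And>c. c \<in> F \<Longrightarrow> g c \<in> F) \<Longrightarrow> g 0 = 0 \<Longrightarrow> poly_over F P \<Longrightarrow> poly_over F (map_poly g P)"
  by (simp add: poly_over_def coeff_map_poly)

lemma poly_over_divmod:
  assumes "poly_over F P" "poly_over F Q" "Q \<noteq> 0"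
  shows "\<exists>D R. poly_over F D \<and> poly_over F R \<and> P = Q * D + R \<and> (R = 0 \<or> degree R < degree Q)"
  using assms(1)
proof (induction "degree P" arbitrary: P rule: less_induct)
  case less
  show ?case
  proof (cases "P = 0 \<or> degree P < degree Q")
    case True
    then show ?thesis
      using less.prems by (intro exI[of _ 0] exI[of _ P]) auto
  next
    case False
    then have P0: "P \<noteq> 0" and le: "degree Q \<le> degree P"
      by auto
    define c where "c = lead_coeff P / lead_coeff Q"
    define M where "M = monom c (degree P - degree Q)"
    have M: "poly_over F M"
      unfolding M_def c_def using less.prems assms(2)
      by (intro poly_over_monom subfield_divide[OF is_subfield] poly_over_coeff)
    have "degree (M * Q) = degree P"
      using P0 assms(3) le by (simp add: M_def c_def degree_mult_eq degree_monom_eq)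
    then have deg_le: "degree (P - M * Q) \<le> degree P"
      by (intro degree_diff_le) simp_all
    have "coeff (P - M * Q) (degree P) = 0"
      using le assms(3) by (simp add: M_def c_def coeff_monom_mult)
    then have "P - M * Q = 0 \<or> degree (P - M * Q) < degree P"
      using deg_le le_neq_implies_less by (metis leading_coeff_0_iff)
    then show ?thesis
    proof
      assume "P - M * Q = 0"
      then show ?thesis
        using M by (intro exI[of _ M] exI[of _ 0]) (simp add: mult.commute)
    next
      assume "degree (P - M * Q) < degree P"
      moreover have "poly_over F (P - M * Q)"
        using less.prems assms(2) M by (intro poly_over_diff poly_over_mult)
      ultimately obtain D R where DR: "poly_over F D" "poly_over F R" "P - M * Q = Q * D + R"
          "R = 0 \<or> degree R < degree Q"
        using less.hyps by blast
      from DR(3) have "P = Q * (D + M) + R"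
        by (simp add: diff_eq_eq algebra_simps)
      then show ?thesis
        using DR(1,2,4) M poly_over_add by blast
    qed
  qed
qed

lemma poly_over_dvd:
  assumes "poly_over F P" "poly_over F Q" "Q \<noteq> 0" "Q dvd P"
  shows "\<exists>D. poly_over F D \<and> P = Q * D"
proof -
  obtain D R where DR: "poly_over F D" "poly_over F R" "P = Q * D + R" "R = 0 \<or> degree R < degree Q"
    using poly_over_divmod[OF assms(1-3)] by blast
  have "Q dvd R"
    using assms(4) DR(3) by (metis dvd_add_right_iff dvd_triv_left)
  then have "R = 0"
    using DR(4) dvd_imp_degree_le[of Q R] by fastforce
  then show ?thesis
    using DR by auto
qed

lemma poly_over_antiderivative:
  assumes "poly_over F C"
  shows "\<exists>Q. poly_over F Q \<and> pderiv Q = C"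
proof -
  define Q where "Q = (\<Sum>i\<le>degree C. monom (coeff C i / of_nat (Suc i)) (Suc i))"
  have "poly_over F Q"
    unfolding Q_def using assms
    by (intro poly_over_sum poly_over_monom subfield_divide[OF is_subfield]
        subfield_of_nat[OF is_subfield] poly_over_coeff)
  moreover have "pderiv Q = (\<Sum>i\<le>degree C. monom (coeff C i) i)"
    unfolding Q_def higher_pderiv_sum[of 1, simplified] pderiv_monom
    by (intro sum.cong refl) (simp del: of_nat_Suc)
  ultimately show ?thesis
    using poly_as_sum_of_monoms by metis
qed

lemma poly_over_min_combination:
  assumes S: "poly_over F S" and U: "poly_over F U" and S0: "S \<noteq> 0"
  shows "\<exists>h \<alpha> \<beta>. poly_over F \<alpha> \<and> poly_over F \<beta> \<and> h = \<alpha> * S + \<beta> * U \<and> h \<noteq> 0 \<and> h dvd S \<and> h dvd U"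
proof -
  define P where "P h \<longleftrightarrow> h \<noteq> 0 \<and> (\<exists>\<alpha> \<beta>. poly_over F \<alpha> \<and> poly_over F \<beta> \<and> h = \<alpha> * S + \<beta> * U)" for h
  have "P S"
    unfolding P_def using S0 by (intro conjI exI[of _ 1] exI[of _ 0]) auto
  then obtain h where h: "P h" and h_min: "\<And>z. P z \<Longrightarrow> degree h \<le> degree z"
    using ex_has_least_nat[of P S degree] by blast
  obtain \<alpha> \<beta> where \<alpha>\<beta>: "poly_over F \<alpha>" "poly_over F \<beta>" and h_eq: "h = \<alpha> * S + \<beta> * U" and h0: "h \<noteq> 0"
    using h unfolding P_def by blast
  have h_over: "poly_over F h"
    unfolding h_eq using \<alpha>\<beta> S U by (intro poly_over_add poly_over_mult)
  have h_dvd: "h dvd Y" if Y: "Y = \<gamma> * S + \<delta> * U" "poly_over F \<gamma>" "poly_over F \<delta>" for Y \<gamma> \<delta>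
  proof -
    have "poly_over F Y"
      unfolding Y using Y(2,3) S U by (intro poly_over_add poly_over_mult)
    then obtain D R where DR: "poly_over F D" "poly_over F R" "Y = h * D + R" "R = 0 \<or> degree R < degree h"
      using poly_over_divmod[OF _ h_over h0] by blast
    have R_eq: "R = (\<gamma> - \<alpha> * D) * S + (\<delta> - \<beta> * D) * U"
      using DR(3) unfolding Y h_eq by (simp add: algebra_simps)
    have "poly_over F (\<gamma> - \<alpha> * D)" "poly_over F (\<delta> - \<beta> * D)"
      using Y(2,3) \<alpha>\<beta> DR(1) by (simp_all add: poly_over_diff poly_over_mult)
    then have "R \<noteq> 0 \<Longrightarrow> P R"
      unfolding P_def using R_eq by blast
    then have "R = 0"
      using DR(4) h_min leD by blast
    then show ?thesis
      using DR(3) by simp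
  qed
  then have "h dvd S" "h dvd U"
    using h_dvd[of S 1 0] h_dvd[of U 0 1] by simp_all
  then show ?thesis
    using h_eq h0 \<alpha>\<beta> by blast
qed

end

lemma dvd_pderiv_imp_dvd_power:
  fixes g T :: "'a::field_char_0 poly"
  assumes "g \<noteq> 0" "g dvd T * pderiv g"
  shows "g dvd T ^ degree g"
  using assms
proof (induction "degree g" arbitrary: g rule: less_induct)
  case less
  interpret subfield UNIV
    by (rule subfield.intro[OF is_subfield_UNIV])
  obtain h \<alpha> \<beta> where h: "h = \<alpha> * g + \<beta> * T" "h \<noteq> 0" "h dvd g" "h dvd T"
    using poly_over_min_combination[OF _ _ less.prems(1), of T] by auto
  show ?case
  proof (cases "degree h = 0")
    case True
    have "pderiv g * h = (\<alpha> * pderiv g) * g + \<beta> * (T * pderiv g)"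
      unfolding h(1) by (simp add: algebra_simps)
    then have "g dvd pderiv g * h"
      using less.prems(2) by simp
    moreover have "is_unit h"
      using is_unit_iff_degree[OF h(2)] True by simp
    ultimately have "g dvd pderiv g"
      by (simp add: dvd_mult_unit_iff)
    then have "degree g = 0"
      using dvd_imp_degree_le[of g "pderiv g"] by (fastforce simp: pderiv_eq_0_iff degree_pderiv)
    then show ?thesis
      using is_unit_iff_degree[OF less.prems(1)] by simp
  next
    case False
    obtain g1 where g1: "g = h * g1"
      using h(3) by (elim dvdE)
    obtain T1 where T1: "T = h * T1"
      using h(4) by (elim dvdE)
    have g1_0: "g1 \<noteq> 0"
      using less.prems(1) g1 by auto
    have deg: "degree g = degree h + degree g1"
      using g1 h(2) g1_0 by (simp add: degree_mult_eq)
    have "h * g1 dvd h * (T1 * h * pderiv g1 + g1 * (T1 * pderiv h))"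
      using less.prems(2) unfolding g1 T1 pderiv_mult by (simp add: algebra_simps)
    then have "g1 dvd T1 * h * pderiv g1 + g1 * (T1 * pderiv h)"
      using h(2) by simp
    then have "g1 dvd T * pderiv g1"
      unfolding T1 by (simp add: dvd_add_left_iff mult_ac)
    then have "g1 dvd T ^ degree g1"
      using less.hyps[of g1] deg False g1_0 by simp
    then have "g dvd T * T ^ degree g1"
      unfolding g1 using h(4) by (rule mult_dvd_mono[rotated])
    also have "\<dots> dvd T ^ degree g"
      using deg False by (simp add: le_imp_power_dvd flip: power_Suc)
    finally show ?thesis .
  qed
qed

context subfield
begin

text \<open>A square-free multiple of B: take S of least degree with B dividing a power of S.
  A common factor of S and S' would divide S / gcd(S, S') to the power deg gcd(S, S'),
  which contradicts minimality.\<close>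

lemma poly_over_coprime_pderiv_multiple:
  assumes B: "poly_over F B" "B \<noteq> 0"
  shows "\<exists>S a b m. poly_over F S \<and> S \<noteq> 0 \<and> B dvd S ^ m \<and> poly_over F a \<and> poly_over F b \<and>
           a * S + b * pderiv S = 1"
proof -
  define P where "P S \<longleftrightarrow> poly_over F S \<and> S \<noteq> 0 \<and> (\<exists>m. B dvd S ^ m)" for S
  have "P B"
    unfolding P_def using B by (metis power_one_right dvd_refl)
  then obtain S where S: "P S" and S_min: "\<And>Z. P Z \<Longrightarrow> degree S \<le> degree Z"
    using ex_has_least_nat[of P B degree] by blast
  then obtain m where S_over: "poly_over F S" and S0: "S \<noteq> 0" and B_dvd: "B dvd S ^ m"
    unfolding P_def by blast
  obtain g \<alpha> \<beta> where g: "poly_over F \<alpha>" "poly_over F \<beta>" "g = \<alpha> * S + \<beta> * pderiv S"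
      "g \<noteq> 0" "g dvd S" "g dvd pderiv S"
    using poly_over_min_combination[OF S_over poly_over_pderiv[OF S_over] S0] by blast
  have g_over: "poly_over F g"
    unfolding g(3) using g(1,2) S_over by (intro poly_over_add poly_over_mult poly_over_pderiv)
  have "degree g = 0"
  proof (rule ccontr)
    assume deg_g: "degree g \<noteq> 0"
    obtain T where T: "poly_over F T" "S = g * T"
      using poly_over_dvd[OF S_over g_over g(4,5)] by blast
    have "g dvd g * pderiv T + T * pderiv g"
      using g(6) unfolding T(2) pderiv_mult .
    then have "g dvd T ^ degree g"
      using g(4) by (intro dvd_pderiv_imp_dvd_power) (simp_all add: dvd_add_right_iff)
    then have "S dvd T ^ Suc (degree g)"
      unfolding T(2) by (simp add: mult_dvd_mono mult.commute)
    then have "S ^ m dvd (T ^ Suc (degree g)) ^ m"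
      by (rule dvd_power_same)
    then have "S ^ m dvd T ^ (Suc (degree g) * m)"
      by (simp only: power_mult)
    then have "B dvd T ^ (Suc (degree g) * m)"
      using B_dvd dvd_trans by blast
    then have "P T"
      unfolding P_def using T S0 by auto
    then have "degree S \<le> degree T"
      by (rule S_min)
    moreover have "degree S = degree g + degree T"
      using T(2) S0 g(4) by (auto simp: degree_mult_eq)
    ultimately show False
      using deg_g by simp
  qed
  then obtain c where c: "g = [:c:]" "c \<noteq> 0"
    using g(4) by (metis degree_0_id pCons_0_0)
  have "c \<in> F"
    using g_over poly_over_coeff[of g 0] c(1) by simp
  moreover have "smult (inverse c) \<alpha> * S + smult (inverse c) \<beta> * pderiv S = 1"
    using c by (simp add: g(3)[symmetric] smult_add_right[symmetric])
  ultimately show ?thesis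
    using S_over S0 B_dvd g(1,2)
    by (blast intro: poly_over_smult subfield_inverse[OF is_subfield])
qed

lemma dependency_extend_by_pivot:
  fixes v :: "nat \<Rightarrow> nat \<Rightarrow> 'a"
  assumes J: "finite J" "k0 \<notin> J" and pivot: "v k0 n \<in> F" "\<forall>k\<in>J. v k n \<in> F"
    and c: "\<forall>k\<in>J. c k \<in> F" "\<exists>k\<in>J. c k \<noteq> 0"
    and dep: "\<forall>i. (\<Sum>k\<in>J. c k * (v k i - v k n / v k0 n * v k0 i)) = 0"
  shows "\<exists>c'. (\<forall>k\<in>insert k0 J. c' k \<in> F) \<and> (\<exists>k\<in>insert k0 J. c' k \<noteq> 0) \<and>
    (\<forall>i. (\<Sum>k\<in>insert k0 J. c' k * v k i) = 0)"
proof -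
  define t where "t = (\<Sum>k\<in>J. c k * v k n) / v k0 n"
  have "t \<in> F"
    unfolding t_def using c(1) pivot
    by (intro subfield_divide[OF is_subfield] subfield_sum[OF is_subfield] subfield_mult[OF is_subfield]) auto
  have "(\<Sum>k\<in>J. c k * v k i) - t * v k0 i = (\<Sum>k\<in>J. c k * (v k i - v k n / v k0 n * v k0 i))" for i
    unfolding t_def sum_divide_distrib sum_distrib_right sum_subtractf[symmetric]
    by (intro sum.cong) (simp_all add: algebra_simps)
  moreover have "(\<Sum>k\<in>J. (c(k0 := - t)) k * v k i) = (\<Sum>k\<in>J. c k * v k i)" for i
    using J(2) by (intro sum.cong) auto
  ultimately have "\<forall>i. (\<Sum>k\<in>insert k0 J. (c(k0 := - t)) k * v k i) = 0"
    using J dep by simp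
  moreover have "\<forall>k\<in>insert k0 J. (c(k0 := - t)) k \<in> F"
    using c(1) \<open>t \<in> F\<close> subfield_uminus[OF is_subfield] by auto
  moreover have "\<exists>k\<in>insert k0 J. (c(k0 := - t)) k \<noteq> 0"
    using c(2) J(2) by auto
  ultimately show ?thesis
    by blast
qed

lemma vectors_linearly_dependent:
  fixes v :: "nat \<Rightarrow> nat \<Rightarrow> 'a"
  shows "finite I \<Longrightarrow> n < card I \<Longrightarrow> \<forall>k\<in>I. \<forall>i. v k i \<in> F \<Longrightarrow> \<forall>k\<in>I. \<forall>i\<ge>n. v k i = 0 \<Longrightarrow>
    \<exists>c. (\<forall>k\<in>I. c k \<in> F) \<and> (\<exists>k\<in>I. c k \<noteq> 0) \<and> (\<forall>i. (\<Sum>k\<in>I. c k * v k i) = 0)"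
proof (induction n arbitrary: I v)
  case 0
  then obtain k0 where "k0 \<in> I"
    by fastforce
  then show ?case
    using 0 subfield_zero[OF is_subfield] subfield_one[OF is_subfield]
    by (intro exI[of _ "\<lambda>k. if k = k0 then 1 else 0"]) auto
next
  case (Suc n)
  show ?case
  proof (cases "\<forall>k\<in>I. v k n = 0")
    case True
    then have "\<forall>k\<in>I. \<forall>i\<ge>n. v k i = 0"
      using Suc.prems(4) le_eq_less_or_eq by (metis Suc_leI)
    then show ?thesis
      using Suc.IH[of I v] Suc.prems by auto
  next
    case False
    then obtain k0 where k0: "k0 \<in> I" "v k0 n \<noteq> 0"
      by blast
    define J where "J = I - {k0}"
    define w where "w k i = v k i - v k n / v k0 n * v k0 i" for k i
    have J: "finite J" "n < card J" "k0 \<notin> J" "I = insert k0 J"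
      using Suc.prems(1,2) k0 by (auto simp: J_def)
    moreover have "\<forall>k\<in>J. \<forall>i. w k i \<in> F"
      unfolding w_def J_def using Suc.prems(3) k0
      by (auto intro!: subfield_diff[OF is_subfield] subfield_mult[OF is_subfield]
          subfield_divide[OF is_subfield])
    moreover have "\<forall>k\<in>J. \<forall>i\<ge>n. w k i = 0"
    proof (intro ballI allI impI)
      fix k i
      assume "k \<in> J" "n \<le> i"
      then show "w k i = 0"
        using k0 Suc.prems(4) by (cases "i = n") (auto simp: w_def J_def)
    qed
    ultimately obtain c where "\<forall>k\<in>J. c k \<in> F" "\<exists>k\<in>J. c k \<noteq> 0" "\<forall>i. (\<Sum>k\<in>J. c k * w k i) = 0"
      using Suc.IH by blast
    then show ?thesis
      unfolding J(4) w_def using J(1,3) Suc.prems(3) k0(1)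
      by (intro dependency_extend_by_pivot) (auto simp: J(4))
  qed
qed

end

lemma sum_atMost_last_nonzero:
  fixes c :: "nat \<Rightarrow> 'a::semiring_0"
  assumes "k \<le> n" "c k \<noteq> 0"
  obtains N where "c N \<noteq> 0" "(\<Sum>i\<le>n. c i * g i) = (\<Sum>i\<le>N. c i * g i)"
proof
  define N where "N = Max {i. i \<le> n \<and> c i \<noteq> 0}"
  have fin: "finite {i. i \<le> n \<and> c i \<noteq> 0}" and ne: "{i. i \<le> n \<and> c i \<noteq> 0} \<noteq> {}"
    using assms by auto
  show "c N \<noteq> 0"
    using Max_in[OF fin ne] unfolding N_def by simp
  have "N \<le> n"
    using Max_in[OF fin ne] unfolding N_def by simp
  then show "(\<Sum>i\<le>n. c i * g i) = (\<Sum>i\<le>N. c i * g i)"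
    using Max_ge[OF fin] unfolding N_def[symmetric]
    by (intro sum.mono_neutral_right) (auto dest: mult_not_zero)
qed

locale rational_dfield = subfield F + d: derivation d + dp: derivation dp
  for F :: "'a::field_char_0 set" and x :: 'a and d dp :: "'a \<Rightarrow> 'a" +
  assumes commute: "\<And>a. d (dp a) = dp (d a)"
    and dp_F: "dp ` F \<subseteq> F" and d_F: "\<And>a. a \<in> F \<Longrightarrow> d a = 0"
    and x_transcendental: "transcendental_over F x"
    and d_x: "d x = 1" and dp_x: "dp x = 0"
begin

definition K where "K = field_gen (insert x F)"

lemma is_subfield_K: "is_subfield K"
  unfolding K_def by (rule is_subfield_field_gen)

lemma F_subset_K: "F \<subseteq> K"
  unfolding K_def using field_gen_superset by blast

lemma x_in_K: "x \<in> K"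
  unfolding K_def using field_gen_superset by blast

lemma d_K: "a \<in> K \<Longrightarrow> d a \<in> K"
  unfolding K_def
  by (rule d.field_gen_closed)
    (use d_x d_F subfield_zero[OF is_subfield_field_gen] subfield_one[OF is_subfield_field_gen] in auto)

lemma dp_K: "a \<in> K \<Longrightarrow> dp a \<in> K"
  unfolding K_def
  by (rule dp.field_gen_closed)
    (use dp_x dp_F field_gen_superset[of "insert x F"] subfield_zero[OF is_subfield_field_gen] in auto)

lemma dp_funpow_K: "a \<in> K \<Longrightarrow> (dp ^^ k) a \<in> K"
  by (induction k) (simp_all add: dp_K)

lemma d_dp_funpow: "d ((dp ^^ k) a) = (dp ^^ k) (d a)"
  by (induction k) (simp_all add: commute)

lemma poly_in_K: "poly_over F P \<Longrightarrow> poly P x \<in> K"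
proof (induction P)
  case (pCons a P)
  then show ?case
    using F_subset_K x_in_K
    by (auto simp: poly_over_pCons intro!: subfield_add[OF is_subfield_K] subfield_mult[OF is_subfield_K])
qed (simp add: subfield_zero[OF is_subfield_K])

lemma d_poly: "poly_over F P \<Longrightarrow> d (poly P x) = poly (pderiv P) x"
  by (induction P) (simp_all add: poly_over_pCons pderiv_pCons d.add d.mult d_F d_x)

lemma dp_poly: "poly_over F P \<Longrightarrow> dp (poly P x) = poly (map_poly dp P) x"
  by (induction P) (simp_all add: poly_over_pCons map_poly_pCons dp.add dp.mult dp_x)

lemma poly_eq_0_iff: "poly_over F P \<Longrightarrow> poly P x = 0 \<longleftrightarrow> P = 0"
proof
  assume P: "poly_over F P" and "poly P x = 0"
  show "P = 0"
  proof (rule ccontr)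
    assume "P \<noteq> 0"
    then have "\<exists>c\<in>set (coeffs P). c \<noteq> 0"
      by (metis last_coeffs_eq_coeff_degree last_in_set leading_coeff_0_iff coeffs_eq_Nil)
    moreover have "\<forall>c\<in>set (coeffs P). c \<in> F"
      using P by (auto simp: poly_over_def coeffs_def)
    ultimately have "(\<Sum>i<length (coeffs P). coeffs P ! i * x ^ i) \<noteq> 0"
      using x_transcendental by (auto simp: transcendental_over_def)
    moreover have "(\<Sum>i<length (coeffs P). coeffs P ! i * x ^ i) = poly P x"
      using \<open>P \<noteq> 0\<close> by (simp add: poly_altdef length_coeffs coeffs_nth atLeast0AtMost lessThan_Suc_atMost)
    ultimately show False
      using \<open>poly P x = 0\<close> by simp
  qed
qed simp

definition fractions :: "'a set" where
  "fractions = {poly A x / poly B x | A B. poly_over F A \<and> poly_over F B \<and> B \<noteq> 0}"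

lemma fractionsI: "poly_over F A \<Longrightarrow> poly_over F B \<Longrightarrow> B \<noteq> 0 \<Longrightarrow> poly A x / poly B x \<in> fractions"
  unfolding fractions_def by blast

lemma is_subfield_fractions: "is_subfield fractions"
  unfolding is_subfield_def
proof (intro conjI ballI)
  show "0 \<in> fractions" "1 \<in> fractions"
    using fractionsI[of 0 1] fractionsI[of 1 1] by simp_all
next
  fix a b assume "a \<in> fractions" "b \<in> fractions"
  then obtain A B C E where AB: "poly_over F A" "poly_over F B" "B \<noteq> 0" "a = poly A x / poly B x"
    and CE: "poly_over F C" "poly_over F E" "E \<noteq> 0" "b = poly C x / poly E x"
    unfolding fractions_def by blast
  have "poly B x \<noteq> 0" "poly E x \<noteq> 0"
    using AB CE poly_eq_0_iff by auto
  then show "a + b \<in> fractions" "a * b \<in> fractions"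
    using fractionsI[of "A * E + C * B" "B * E"] fractionsI[of "A * C" "B * E"] AB CE
    by (simp_all add: poly_over_add poly_over_mult add_frac_eq)
next
  fix a assume "a \<in> fractions"
  then obtain A B where AB: "poly_over F A" "poly_over F B" "B \<noteq> 0" "a = poly A x / poly B x"
    unfolding fractions_def by blast
  show "- a \<in> fractions"
    using fractionsI[of "- A" B] AB by (simp add: poly_over_uminus)
  show "inverse a \<in> fractions"
  proof (cases "A = 0")
    case True
    then show ?thesis
      using fractionsI[of 0 1] AB by simp
  next
    case False
    then show ?thesis
      using fractionsI[of B A] AB by simp
  qed
qed

lemma K_subset_fractions: "K \<subseteq> fractions"
  unfolding K_def
proof (rule field_gen_least[OF is_subfield_fractions])
  show "insert x F \<subseteq> fractions"
    using fractionsI[of "[:0, 1:]" 1] fractionsI[of "[:c:]" 1 for c] poly_over_X poly_over_const by auto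
qed

lemma K_fraction:
  assumes "a \<in> K"
  obtains A B where "poly_over F A" "poly_over F B" "B \<noteq> 0" "a = poly A x / poly B x"
  using assms K_subset_fractions unfolding fractions_def by blast

lemma dp_funpow_fraction:
  assumes A: "poly_over F A" and B: "poly_over F B" "B \<noteq> 0"
  shows "\<exists>C. poly_over F C \<and> (dp ^^ k) (poly A x / poly B x) = poly C x / poly B x ^ Suc k"
proof (induction k)
  case 0
  then show ?case
    using A by auto
next
  case (Suc k)
  then obtain C where C: "poly_over F C" "(dp ^^ k) (poly A x / poly B x) = poly C x / poly B x ^ Suc k"
    by blast
  have B0: "poly B x \<noteq> 0"
    using poly_eq_0_iff[OF B(1)] B(2) by simp
  define C' where "C' = map_poly dp C * B - smult (of_nat (Suc k)) (C * map_poly dp B)"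
  have "poly_over F C'"
    unfolding C'_def using C(1) B(1) dp_F
    by (intro poly_over_diff poly_over_mult poly_over_smult poly_over_map_poly
        subfield_of_nat[OF is_subfield]) auto
  moreover have "(dp ^^ Suc k) (poly A x / poly B x) = poly C' x / poly B x ^ Suc (Suc k)"
  proof -
    have "(dp ^^ Suc k) (poly A x / poly B x)
        = (dp (poly C x) * poly B x ^ Suc k - poly C x * dp (poly B x ^ Suc k)) / (poly B x ^ Suc k) ^ 2"
      using C(2) B0 by (simp add: dp.divide del: power_Suc)
    also have "\<dots> = poly C' x / poly B x ^ Suc (Suc k)"
      unfolding C'_def dp.power dp_poly[OF C(1)] dp_poly[OF B(1)] using B0
      by (simp add: field_simps power2_eq_square)
    finally show ?thesis .
  qed
  ultimately show ?case
    by blast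
qed

lemma fraction_remainder_mod_d:
  assumes S: "poly_over F S" "S \<noteq> 0" and C: "poly_over F C"
  shows "\<exists>R w. poly_over F R \<and> (\<forall>i\<ge>degree S. coeff R i = 0) \<and> w \<in> K \<and>
           poly C x / poly S x = poly R x / poly S x + d w"
proof -
  obtain D R where DR: "poly_over F D" "poly_over F R" "C = S * D + R" "R = 0 \<or> degree R < degree S"
    using poly_over_divmod[OF C S] by blast
  obtain Q where Q: "poly_over F Q" "pderiv Q = D"
    using poly_over_antiderivative[OF DR(1)] by blast
  have "poly S x \<noteq> 0"
    using poly_eq_0_iff[OF S(1)] S(2) by simp
  then have "poly C x / poly S x = poly R x / poly S x + d (poly Q x)"
    by (simp add: DR(3) d_poly[OF Q(1)] Q(2) field_simps)
  moreover have "\<forall>i\<ge>degree S. coeff R i = 0"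
    using DR(4) by (auto intro: coeff_eq_0)
  ultimately show ?thesis
    using DR(2) poly_in_K[OF Q(1)] by blast
qed

lemma hermite_reduction:
  assumes S: "poly_over F S" "S \<noteq> 0"
    and bezout: "poly_over F a" "poly_over F b" "a * S + b * pderiv S = 1"
  shows "poly_over F C \<Longrightarrow> \<exists>R w. poly_over F R \<and> (\<forall>i\<ge>degree S. coeff R i = 0) \<and> w \<in> K \<and>
           poly C x / poly S x ^ Suc n = poly R x / poly S x + d w"
proof (induction n arbitrary: C)
  case 0
  then show ?case
    using fraction_remainder_mod_d[OF S] by simp
next
  case (Suc n)
  have S0: "poly S x \<noteq> 0"
    using poly_eq_0_iff[OF S(1)] S(2) by simp
  have bezout_x: "poly a x * poly S x + poly b x * d (poly S x) = 1"
    using arg_cong[OF bezout(3), of "\<lambda>P. poly P x"] by (simp add: d_poly[OF S(1)])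
  define C' where "C' = C * a + smult (inverse (of_nat (Suc n))) (pderiv (C * b))"
  have "poly_over F C'"
    unfolding C'_def using Suc.prems bezout
    by (intro poly_over_add poly_over_mult poly_over_smult poly_over_pderiv
        subfield_inverse[OF is_subfield] subfield_of_nat[OF is_subfield])
  then obtain R w where Rw: "poly_over F R" "\<forall>i\<ge>degree S. coeff R i = 0" "w \<in> K"
      "poly C' x / poly S x ^ Suc n = poly R x / poly S x + d w"
    using Suc.IH by blast
  define w' where "w' = - (poly C x * poly b x / poly S x ^ Suc n) / of_nat (Suc n)"
  have "w' \<in> K"
    unfolding w'_def using Suc.prems bezout S(1)
    by (intro subfield_divide[OF is_subfield_K] subfield_uminus[OF is_subfield_K]
        subfield_mult[OF is_subfield_K] subfield_power[OF is_subfield_K] poly_in_K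
        subfield_of_nat[OF is_subfield_K])
  have "d (poly C x * poly b x) = poly (pderiv (C * b)) x"
    using d_poly[of "C * b"] Suc.prems bezout by (simp add: poly_over_mult)
  then have "poly C x * poly a x + d (poly C x * poly b x) / of_nat (Suc n) = poly C' x"
    unfolding C'_def by (simp add: divide_inverse mult.commute)
  then have "poly C x / poly S x ^ Suc (Suc n) = poly C' x / poly S x ^ Suc n + d w'"
    using d.hermite_step[OF S0 bezout_x, of "Suc n" "poly C x"] unfolding w'_def by simp
  also have "\<dots> = poly R x / poly S x + d (w + w')"
    using Rw(4) by (simp add: d.add)
  finally show ?case
    using Rw(1,2) subfield_add[OF is_subfield_K Rw(3) \<open>w' \<in> K\<close>] by blast
qed

lemma fraction_denominator_multiple:
  assumes S: "poly_over F S" "S \<noteq> 0" and E: "S ^ m = B * E"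
  shows "poly C x / poly B x ^ j = poly (C * E ^ j * S) x / poly S x ^ Suc (m * j)"
proof -
  have S0: "poly S x \<noteq> 0"
    using poly_eq_0_iff[OF S(1)] S(2) by simp
  have "poly S x ^ m = poly B x * poly E x"
    using arg_cong[OF E, of "\<lambda>P. poly P x"] by simp
  then have BE: "poly B x ^ j * poly E x ^ j = poly S x ^ (m * j)"
    by (simp only: power_mult power_mult_distrib)
  then have "poly E x ^ j \<noteq> 0"
    using S0 by (metis mult_zero_right power_not_zero)
  have "poly (C * E ^ j * S) x / poly S x ^ Suc (m * j) = poly C x * poly E x ^ j / poly S x ^ (m * j)"
    using S0 by simp
  also have "\<dots> = poly C x / poly B x ^ j"
    unfolding BE[symmetric] using \<open>poly E x ^ j \<noteq> 0\<close> by simp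
  finally show ?thesis ..
qed

lemma dp_funpow_reduced:
  assumes "q \<in> K"
  obtains S where "poly_over F S" "S \<noteq> 0"
    "\<And>k. \<exists>R w. poly_over F R \<and> (\<forall>i\<ge>degree S. coeff R i = 0) \<and> w \<in> K \<and>
           (dp ^^ k) q = poly R x / poly S x + d w"
proof -
  obtain A B where AB: "poly_over F A" "poly_over F B" "B \<noteq> 0" "q = poly A x / poly B x"
    using K_fraction[OF assms] .
  obtain S a b m where S: "poly_over F S" "S \<noteq> 0" "B dvd S ^ m"
    and bezout: "poly_over F a" "poly_over F b" "a * S + b * pderiv S = 1"
    using poly_over_coprime_pderiv_multiple[OF AB(2,3)] by blast
  obtain E where E: "poly_over F E" "S ^ m = B * E"
    using poly_over_dvd[OF poly_over_power[OF S(1)] AB(2,3) S(3)] by blast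
  have "\<exists>R w. poly_over F R \<and> (\<forall>i\<ge>degree S. coeff R i = 0) \<and> w \<in> K \<and>
          (dp ^^ k) q = poly R x / poly S x + d w" for k
  proof -
    obtain C where C: "poly_over F C" "(dp ^^ k) q = poly C x / poly B x ^ Suc k"
      using dp_funpow_fraction[OF AB(1-3)] AB(4) by blast
    have "(dp ^^ k) q = poly (C * E ^ Suc k * S) x / poly S x ^ Suc (m * Suc k)"
      unfolding C(2) by (rule fraction_denominator_multiple[OF S(1,2) E(2)])
    moreover have "poly_over F (C * E ^ Suc k * S)"
      using C(1) E(1) S(1) by (intro poly_over_mult poly_over_power)
    ultimately show ?thesis
      using hermite_reduction[OF S(1,2) bezout] by metis
  qed
  then show ?thesis
    using S(1,2) that by blast
qed

lemma dp_funpow_dependent_mod_d: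
  assumes "q \<in> K"
  shows "\<exists>N c. (\<forall>k. c k \<in> F) \<and> c N \<noteq> 0 \<and> (\<exists>w\<in>K. (\<Sum>k\<le>N. c k * (dp ^^ k) q) = d w)"
proof -
  obtain S where S: "poly_over F S" "S \<noteq> 0" and
    "\<And>k. \<exists>R w. poly_over F R \<and> (\<forall>i\<ge>degree S. coeff R i = 0) \<and> w \<in> K \<and>
           (dp ^^ k) q = poly R x / poly S x + d w"
    using dp_funpow_reduced[OF assms] by blast
  then obtain R w where R: "\<And>k. poly_over F (R k)" "\<And>k i. i \<ge> degree S \<Longrightarrow> coeff (R k) i = 0"
    and w: "\<And>k. w k \<in> K" and red: "\<And>k. (dp ^^ k) q = poly (R k) x / poly S x + d (w k)"
    by metis
  define n where "n = degree S"
  obtain c0 where c0: "\<forall>k\<in>{..n}. c0 k \<in> F" "\<exists>k\<in>{..n}. c0 k \<noteq> 0"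
      "\<forall>i. (\<Sum>k\<in>{..n}. c0 k * coeff (R k) i) = 0"
    using vectors_linearly_dependent[of "{..n}" n "\<lambda>k i. coeff (R k) i"] R
    by (auto simp: n_def poly_over_coeff)
  define c where "c k = (if k \<le> n then c0 k else 0)" for k
  have c_F: "c k \<in> F" for k
    using c0(1) subfield_zero[OF is_subfield] by (simp add: c_def)
  have "(\<Sum>k\<le>n. smult (c k) (R k)) = 0"
    using c0(3) by (intro poly_eqI) (simp add: coeff_sum c_def)
  then have "poly (\<Sum>k\<le>n. smult (c k) (R k)) x = 0"
    by simp
  then have "(\<Sum>k\<le>n. c k * poly (R k) x / poly S x) = 0"
    by (simp add: poly_sum sum_divide_distrib[symmetric])
  moreover have "(\<Sum>k\<le>n. c k * d (w k)) = d (\<Sum>k\<le>n. c k * w k)"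
    using c_F d_F by (simp add: d.sum d.mult_const)
  ultimately have rel: "(\<Sum>k\<le>n. c k * (dp ^^ k) q) = d (\<Sum>k\<le>n. c k * w k)"
    by (simp add: red distrib_left sum.distrib)
  have "(\<Sum>k\<le>n. c k * w k) \<in> K"
    using c_F F_subset_K w by (intro subfield_sum[OF is_subfield_K] subfield_mult[OF is_subfield_K]) auto
  moreover obtain k where "k \<le> n" "c k \<noteq> 0"
    using c0(2) by (auto simp: c_def)
  then obtain N where "c N \<noteq> 0" "(\<Sum>i\<le>n. c i * (dp ^^ i) q) = (\<Sum>i\<le>N. c i * (dp ^^ i) q)"
    by (rule sum_atMost_last_nonzero)
  ultimately show ?thesis
    using rel c_F by metis
qed

lemma d_log_deriv:
  assumes "d u = p * u" "u \<noteq> 0"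
  shows "d (dp u / u) = dp p"
proof -
  have "d (dp u) = p * dp u + dp p * u"
    by (simp add: commute assms(1) dp.mult)
  then show ?thesis
    using assms by (simp add: d.divide field_simps power2_eq_square)
qed

text \<open>Since \<delta>(\<partial>^k v) = \<partial>^(k+1) p for v = \<partial>u / u, a relation among the \<partial>^(k+1) p
  modulo \<delta>K lifts to a combination of the \<partial>^k v with vanishing \<delta>-derivative, which is a
  \<delta>-constant and hence lies in K.\<close>

lemma log_deriv_linear_relation:
  assumes p: "p \<in> K" and constants: "\<And>a. d a = 0 \<Longrightarrow> a \<in> K"
    and u: "d u = p * u" "u \<noteq> 0"
  shows "\<exists>N c. (\<forall>k. c k \<in> F) \<and> c N \<noteq> 0 \<and> (\<Sum>k\<le>N. c k * (dp ^^ k) (dp u / u)) \<in> K"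
proof -
  obtain N c w where c: "\<forall>k. c k \<in> F" "c N \<noteq> 0" and w: "w \<in> K"
    and rel: "(\<Sum>k\<le>N. c k * (dp ^^ k) (dp p)) = d w"
    using dp_funpow_dependent_mod_d[OF dp_K[OF p]] by blast
  define z where "z = (\<Sum>k\<le>N. c k * (dp ^^ k) (dp u / u))"
  have "d z = (\<Sum>k\<le>N. c k * (dp ^^ k) (dp p))"
    unfolding z_def using c(1) d_F
    by (simp add: d.sum d.mult_const d_dp_funpow d_log_deriv[OF u])
  then have "d (z - w) = 0"
    by (simp add: d.diff rel)
  then have "z - w + w \<in> K"
    using constants w by (blast intro: subfield_add[OF is_subfield_K])
  then show ?thesis
    using c unfolding z_def by auto
qed

lemma log_deriv_generators_closed:
  assumes p: "p \<in> K" and u: "d u = p * u" "u \<noteq> 0"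
    and S: "is_subfield S" "K \<subseteq> S" "u \<in> S" "\<And>k. k \<le> N \<Longrightarrow> (dp ^^ k) (dp u / u) \<in> S"
    and b: "b \<in> K \<union> insert u ((\<lambda>k. (dp ^^ k) (dp u / u)) ` {..<N})"
  shows "d b \<in> S \<and> dp b \<in> S"
proof -
  consider "b \<in> K" | "b = u" | k where "k < N" "b = (dp ^^ k) (dp u / u)"
    using b by blast
  then show ?thesis
  proof cases
    case 1
    then show ?thesis
      using d_K dp_K S(2) by blast
  next
    case 2
    have "dp u / u * u \<in> S"
      using S(4)[of 0] S(3) subfield_mult[OF S(1)] by (simp only: funpow_0)
    moreover have "p * u \<in> S"
      using p S(2,3) by (blast intro: subfield_mult[OF S(1)])
    ultimately show ?thesis
      using 2 u by simp
  next
    case 3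
    have "d ((dp ^^ k) (dp u / u)) = (dp ^^ Suc k) p"
      unfolding d_dp_funpow d_log_deriv[OF u] by (simp add: funpow_swap1)
    then show ?thesis
      using 3 S(2) S(4)[of "Suc k"] dp_funpow_K[OF p, of "Suc k"] by auto
  qed
qed

lemma log_deriv_relation_finitely_generated:
  assumes p: "p \<in> K" and u: "d u = p * u" "u \<noteq> 0"
    and c: "\<And>k. c k \<in> F" "c N \<noteq> 0"
    and rel: "(\<Sum>k\<le>N. c k * (dp ^^ k) (dp u / u)) \<in> K"
  shows "\<exists>G. finite G \<and> dfield_gen {d, dp} (insert u K) = field_gen (K \<union> G)"
proof -
  define v where "v k = (dp ^^ k) (dp u / u)" for k
  define G where "G = insert u (v ` {..<N})"
  define \<Phi> where "\<Phi> = field_gen (K \<union> G)"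
  note \<Phi>_field = is_subfield_field_gen[of "K \<union> G", folded \<Phi>_def]
  have K_\<Phi>: "K \<subseteq> \<Phi>" and u_\<Phi>: "u \<in> \<Phi>" and v_\<Phi>: "\<And>k. k < N \<Longrightarrow> v k \<in> \<Phi>"
    unfolding \<Phi>_def G_def using field_gen_superset[of "K \<union> insert u (v ` {..<N})"] by auto
  have "v N \<in> \<Phi>"
    by (rule subfield_solve_last[OF \<Phi>_field, where c = c])
      (use rel c F_subset_K K_\<Phi> v_\<Phi> in \<open>auto simp: v_def\<close>)
  then have v_le: "v k \<in> \<Phi>" if "k \<le> N" for k
    using that v_\<Phi> by (cases "k = N") auto
  have "dfield_gen {d, dp} (insert u K) = \<Phi>"
    unfolding \<Phi>_def
  proof (rule dfield_gen_eq_field_gen)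
    show "insert u K \<subseteq> field_gen (K \<union> G)"
      using K_\<Phi> u_\<Phi> unfolding \<Phi>_def by blast
    have "v k \<in> dfield_gen {d, dp} (insert u K)" for k
      unfolding v_def by (rule dfield_gen_log_deriv) simp
    then show "K \<union> G \<subseteq> dfield_gen {d, dp} (insert u K)"
      unfolding G_def using dfield_gen_superset by blast
    have "d b \<in> \<Phi> \<and> dp b \<in> \<Phi>" if "b \<in> K \<union> G" for b
      using log_deriv_generators_closed[OF p u \<Phi>_field K_\<Phi> u_\<Phi>, of N b] v_le that
      unfolding G_def v_def by blast
    then show "\<And>D. D \<in> {d, dp} \<Longrightarrow> derivation D \<and> (\<forall>b\<in>K \<union> G. D b \<in> field_gen (K \<union> G))"
      unfolding \<Phi>_def using d.derivation_axioms dp.derivation_axioms by blast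
  qed
  moreover have "finite G"
    unfolding G_def by simp
  ultimately show ?thesis
    unfolding \<Phi>_def by blast
qed

end

theorem lemma3p1:
  fixes F K :: "'a::field_char_0 set"
    and x p eta :: 'a
    and d dp :: "'a \<Rightarrow> 'a"
  assumes der_d: "is_derivation d" and der_dp: "is_derivation dp"
    and commute: "\<And>a. d (dp a) = dp (d a)"
    and F_sub: "is_subfield F" and F_dp: "dp ` F \<subseteq> F"
    and F_dcl: "diff_closed F dp"
    and d_F: "\<And>a. a \<in> F \<Longrightarrow> d a = 0"
    and x_tr: "transcendental_over F x"
    and dx: "d x = 1" and dpx: "dp x = 0"
    and K_def: "K = field_gen (insert x F)"
    and p_K: "p \<in> K"
    and PPV: "\<exists>y1 y2. d (d y1) = p * d y1 \<and> d (d y2) = p * d y2 \<and>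
               (\<forall>c1\<in>{a\<in>K. d a = 0}. \<forall>c2\<in>{a\<in>K. d a = 0}.
                   c1 * y1 + c2 * y2 = 0 \<longrightarrow> c1 = 0 \<and> c2 = 0) \<and>
               dfield_gen {d, dp} (K \<union> {y1, y2}) = UNIV"
    and M_const: "{a. d a = 0} = {a\<in>K. d a = 0}"
    and eta_sol: "d (d eta) = p * d eta" and eta_nz: "d eta \<noteq> 0"
  shows "\<not> d_transcendental K dp (d eta) \<and>
         (\<exists>G. finite G \<and> dfield_gen {d, dp} (insert (d eta) K) = field_gen (K \<union> G))"
proof -
  interpret R: rational_dfield F x d dp
    by unfold_locales (use assms in auto)
  have K: "R.K = K"
    by (simp add: R.K_def K_def)
  have constants: "\<And>a. d a = 0 \<Longrightarrow> a \<in> K"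
    using M_const by blast
  obtain N c where c: "\<forall>k. c k \<in> F" "c N \<noteq> 0"
    and rel: "(\<Sum>k\<le>N. c k * (dp ^^ k) (dp (d eta) / d eta)) \<in> K"
    using R.log_deriv_linear_relation[of p "d eta"] p_K constants eta_sol eta_nz unfolding K by blast
  have "\<not> d_transcendental K dp (d eta)"
    using R.dp.log_deriv_relation_not_d_transcendental[OF R.is_subfield_K _ eta_nz, of c N] R.dp_K
      R.F_subset_K c rel unfolding K by blast
  moreover have "\<exists>G. finite G \<and> dfield_gen {d, dp} (insert (d eta) K) = field_gen (K \<union> G)"
    using R.log_deriv_relation_finitely_generated[of p "d eta" c N] p_K eta_sol eta_nz c rel
    unfolding K by blast
  ultimately show ?thesis ..
qed

end
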